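(* Let $L$ be a positive definite lattice with $\operatorname{rank} L\geq 4$. Then $\mathcal{E}(\operatorname{gen} L)=\mathbb{N}\setminus Q(\operatorname{gen} L)$ is a finite union of admissible arithmetic progressions.
   Context: A lattice is a finitely generated $\mathbb{Z}$-submodule $L$ of a finite-dimensional quadratic space $(V,Q)$ over $\mathbb{Q}$, with associated symmetric bilinear form $B$ satisfying $Q(v)=B(v,v)$; it is assumed throughout that the scale of $L$ (the fractional ideal generated by $\{B(x,y):x,y\in L\}$) equals $\mathbb{Z}$. $L$ is positive definite if $Q(v)>0$ for all nonzero $v\in L$. $\mathbb{N}$ is the set of positive integers. For a prime $p$, $L_p=\mathbb{Z}_p\otimes L$ is the localization, and $Q(L_p)=\{Q(v):v\in L_p\}\subseteq\mathbb{Z}_p$. $\operatorname{gen} L$ is the genus of $L$, and $Q(\operatorname{gen} L)=\{a\in\mathbb{Z}: a\in Q(K)\text{ for some }K\in\operatorname{gen}L\}$; equivalently, $a\in Q(\operatorname{gen}L)$ iff $a\in Q(L_p)$ for all primes $p$. For positive integers $a<m$, $\mathcal{A}_{a,m}=\{a+mx : x\in\mathbb{N}\cup\{0\}\}$, and $\mathcal{A}_{a,m}$ is admissible if $\operatorname{ord}_p a<\operatorname{ord}_p m$ for every prime $p\mid m$. *)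

theory Defs
  imports "HOL-Computational_Algebra.Computational_Algebra" "HOL-Number_Theory.Number_Theory"
begin

text \<open>A lattice of rank n is modelled (up to isometry) as Z^n with an integral symmetric
Gram matrix G (indices < n); vectors are functions nat => int, only coordinates < n matter.\<close>

definition bil :: "nat \<Rightarrow> (nat \<Rightarrow> nat \<Rightarrow> int) \<Rightarrow> (nat \<Rightarrow> int) \<Rightarrow> (nat \<Rightarrow> int) \<Rightarrow> int" where
  "bil n G x y = (\<Sum>i<n. \<Sum>j<n. G i j * x i * y j)"

definition quad :: "nat \<Rightarrow> (nat \<Rightarrow> nat \<Rightarrow> int) \<Rightarrow> (nat \<Rightarrow> int) \<Rightarrow> int" where
  "quad n G x = bil n G x x"

definition sym_gram :: "nat \<Rightarrow> (nat \<Rightarrow> nat \<Rightarrow> int) \<Rightarrow> bool" where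
  "sym_gram n G \<longleftrightarrow> (\<forall>i<n. \<forall>j<n. G i j = G j i)"

definition pos_def :: "nat \<Rightarrow> (nat \<Rightarrow> nat \<Rightarrow> int) \<Rightarrow> bool" where
  "pos_def n G \<longleftrightarrow> (\<forall>x. (\<exists>i<n. x i \<noteq> 0) \<longrightarrow> quad n G x > 0)"

text \<open>scale L = Z: the ideal generated by all B(x,y) is Z.\<close>
definition scale_one :: "nat \<Rightarrow> (nat \<Rightarrow> nat \<Rightarrow> int) \<Rightarrow> bool" where
  "scale_one n G \<longleftrightarrow> (\<forall>d::int. (\<forall>x y. d dvd bil n G x y) \<longrightarrow> d dvd 1)"

text \<open>a \<in> Q(L_p): by compactness of Z_p^n and density of Z^n, equivalent to
representability of a modulo every power of p by integral vectors.\<close>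
definition local_rep :: "nat \<Rightarrow> (nat \<Rightarrow> nat \<Rightarrow> int) \<Rightarrow> int \<Rightarrow> int \<Rightarrow> bool" where
  "local_rep n G p a \<longleftrightarrow> (\<forall>k::nat. \<exists>x. [quad n G x = a] (mod p ^ k))"

definition gen_rep :: "nat \<Rightarrow> (nat \<Rightarrow> nat \<Rightarrow> int) \<Rightarrow> int \<Rightarrow> bool" where
  "gen_rep n G a \<longleftrightarrow> (\<forall>p::int. prime p \<longrightarrow> local_rep n G p a)"

definition exceptions_gen :: "nat \<Rightarrow> (nat \<Rightarrow> nat \<Rightarrow> int) \<Rightarrow> int set" where
  "exceptions_gen n G = {a. a > 0 \<and> \<not> gen_rep n G a}"

definition AP :: "int \<Rightarrow> int \<Rightarrow> int set" where
  "AP a m = {a + m * int x | x. True}"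

definition admissible :: "int \<Rightarrow> int \<Rightarrow> bool" where
  "admissible a m \<longleftrightarrow> 0 < a \<and> a < m \<and>
     (\<forall>p::int. prime p \<longrightarrow> p dvd m \<longrightarrow> multiplicity p a < multiplicity p m)"

end

theory Submission
  imports Defs
begin

(* Pick four mutually orthogonal vectors of L (Gram-Schmidt without denominators). They span a
   sublattice with diagonal form d0 x0^2 + d1 x1^2 + d2 x2^2 + d3 x3^2, and it suffices to represent a
   over Z_p by this form. Write d_i = p^(e_i) v_i and a = p^s u with p-adic units v_i, u; call
   s - e_i the gap of i. A unit solution modulo p^(t + c), with c = 1 for odd p and c = 3 for p = 2,
   lifts to Z_p by Hensel's lemma. For p not dividing 2 d0 d1 d2 such a solution comes from the
   fact that a binary form represents every residue mod p. If s exceeds every e_i, a case analysis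
   on the parities of the gaps yields one: terms with even gap are scaled to valuation s or s + 2,
   terms with odd gap to s + 1 or s - 1, and the residues mod p (or mod 8) are matched.
   So a can fail to be locally represented only at primes p <= 2 d0 d1 d2 and with
   v_p(a) < d0 + d1 + d2 + d3; moreover local representability of a depends only on a modulo
   p^(v_p(a) + 3), and the classes r mod p^(v_p(r) + 3) are admissible progressions. *)

section \<open>Hensel lifting of square roots\<close>

lemma square_root_lift_step_odd:
  fixes p s w :: int
  assumes p: "prime p" "odd p" and j: "1 \<le> j"
    and w: "[w^2 = s] (mod p^j)" "\<not> p dvd w"
  shows "\<exists>w'. [w'^2 = s] (mod p^Suc j) \<and> \<not> p dvd w'"
proof -
  obtain r where r: "w^2 - s = p^j * r"
    using w(1) by (auto simp: cong_iff_dvd_diff elim: dvdE)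
  have "coprime (2 * w) p"
    using p w(2) by (simp add: coprime_commute prime_imp_coprime)
  then obtain x where x: "[2 * w * x = 1] (mod p)"
    using cong_solve_coprime_int by blast
  define t where "t = - r * x"
  have "p dvd r * (2 * w * x - 1)"
    using x by (simp add: cong_iff_dvd_diff)
  moreover have "r + 2 * w * t = - (r * (2 * w * x - 1))"
    by (simp add: t_def algebra_simps)
  ultimately have "p dvd r + 2 * w * t"
    by simp
  moreover have "p^Suc j dvd t^2 * p^(2*j)"
    using j by (intro dvd_mult le_imp_power_dvd) simp
  ultimately have "p^Suc j dvd p^j * (r + 2 * w * t) + t^2 * p^(2*j)"
    by simp
  also have "\<dots> = (w^2 - s) + 2 * w * t * p^j + t^2 * (p^j)^2"
    unfolding r by (simp add: power_mult[symmetric] mult.commute distrib_left)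
  also have "\<dots> = (w + t * p^j)^2 - s"
    by (simp add: power2_eq_square algebra_simps)
  finally have "[(w + t * p^j)^2 = s] (mod p^Suc j)"
    by (simp add: cong_iff_dvd_diff)
  moreover have "\<not> p dvd w + t * p^j"
    using w(2) j by (simp add: dvd_add_left_iff dvd_power_le)
  ultimately show ?thesis by blast
qed

lemma square_root_lift_step_2:
  fixes s w :: int
  assumes j: "3 \<le> j" and w: "[w^2 = s] (mod 2^j)" "odd w"
  shows "\<exists>w'. [w'^2 = s] (mod 2^Suc j) \<and> odd w'"
proof -
  obtain r where r: "w^2 - s = 2^j * r"
    using w(1) by (auto simp: cong_iff_dvd_diff elim: dvdE)
  obtain i where i: "j = Suc i" and "2 \<le> i"
    using j by (cases j) auto
  have "(2::int)^Suc j dvd 2^j * (r * (1 + w))"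
    using w(2) by simp
  moreover have "(2::int)^Suc j dvd r^2 * 2^(2*i)"
    using i \<open>2 \<le> i\<close> by (intro dvd_mult le_imp_power_dvd) simp
  ultimately have "(2::int)^Suc j dvd 2^j * (r * (1 + w)) + r^2 * 2^(2*i)"
    by simp
  also have "\<dots> = (w^2 - s) + 2 * w * r * 2^i + r^2 * (2^i)^2"
    unfolding r i by (simp add: power_mult[symmetric] mult.commute algebra_simps)
  also have "\<dots> = (w + r * 2^i)^2 - s"
    by (simp add: power2_eq_square algebra_simps)
  finally have "[(w + r * 2^i)^2 = s] (mod 2^Suc j)"
    by (simp add: cong_iff_dvd_diff)
  moreover have "odd (w + r * 2^i)"
    using w(2) \<open>2 \<le> i\<close> by simp
  ultimately show ?thesis by blast
qed

lemma square_root_of_cong_1: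
  fixes p s :: int
  assumes p: "prime p" and c: "(odd p \<and> 1 \<le> c) \<or> 3 \<le> c" and s: "[s = 1] (mod p^c)"
  shows "\<exists>w. [w^2 = s] (mod p^k) \<and> \<not> p dvd w"
proof (induction k)
  case 0
  show ?case
    using p not_prime_unit by (intro exI[of _ 1]) auto
next
  case (Suc k)
  show ?case
  proof (cases "Suc k \<le> c")
    case True
    then have "[1 = s] (mod p^Suc k)"
      using s by (meson cong_dvd_modulus cong_sym le_imp_power_dvd)
    then show ?thesis
      using p not_prime_unit by (intro exI[of _ 1]) auto
  next
    case False
    from Suc.IH obtain w where w: "[w^2 = s] (mod p^k)" "\<not> p dvd w"
      by blast
    show ?thesis
    proof (cases "odd p")
      case True
      have "1 \<le> k"
        using False c by auto
      then show ?thesis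
        by (rule square_root_lift_step_odd[OF p True _ w])
    next
      case False
      then have "p = 2"
        using p prime_odd_int[of p] prime_ge_2_int[of p] by fastforce
      moreover have "3 \<le> k"
        using False c \<open>\<not> Suc k \<le> c\<close> by auto
      ultimately show ?thesis
        using square_root_lift_step_2[of k w s] w by simp
    qed
  qed
qed

lemma cong_unit_times_square:
  fixes p v v' :: int
  assumes p: "prime p" and c: "(odd p \<and> 1 \<le> c) \<or> 3 \<le> c" and v: "\<not> p dvd v"
    and vv: "[v' = v] (mod p^c)"
  shows "\<exists>w. [v * w^2 = v'] (mod p^k)"
proof -
  have "coprime v (p^max k c)"
    using v p by (simp add: prime_imp_coprime coprime_commute)
  then obtain i where "[v * i = 1] (mod p^max k c)"
    using cong_solve_coprime_int by blast
  then have i: "[v * i = 1] (mod p^c)" "[v * i = 1] (mod p^k)"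
    by (meson cong_dvd_modulus le_imp_power_dvd max.cobounded1 max.cobounded2)+
  have "[v' * i = v * i] (mod p^c)"
    using vv by (simp add: cong_scalar_right)
  then obtain w where w: "[w^2 = v' * i] (mod p^k)"
    using square_root_of_cong_1[OF p c] cong_trans[OF _ i(1)] by blast
  have "[v * w^2 = v * (v' * i)] (mod p^k)"
    using w by (simp add: cong_scalar_left)
  also have "[v * (v' * i) = v' * 1] (mod p^k)"
    using cong_scalar_left[OF i(2), of v'] by (simp add: ac_simps)
  finally show ?thesis by auto
qed

section \<open>Local representations by a diagonal quaternary form\<close>

definition diag4 :: "(nat \<Rightarrow> int) \<Rightarrow> (nat \<Rightarrow> int) \<Rightarrow> int" where
  "diag4 d x = (\<Sum>i<4. d i * (x i)^2)"

definition local_rep_diag4 :: "int \<Rightarrow> (nat \<Rightarrow> int) \<Rightarrow> int \<Rightarrow> bool" where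
  "local_rep_diag4 p d a \<longleftrightarrow> (\<forall>k::nat. \<exists>x. [diag4 d x = a] (mod p^k))"

lemma diag4_fun_upd:
  assumes "i < 4"
  shows "diag4 d (x(i := y)) = diag4 d x - d i * (x i)^2 + d i * y^2"
proof -
  have i: "i \<in> {..<4}"
    using assms by simp
  have "diag4 d (x(i := y)) = d i * y^2 + (\<Sum>m\<in>{..<4} - {i}. d m * ((x(i := y)) m)^2)"
    unfolding diag4_def by (subst sum.remove[OF finite_lessThan i]) (simp only: fun_upd_same)
  also have "(\<Sum>m\<in>{..<4} - {i}. d m * ((x(i := y)) m)^2) = (\<Sum>m\<in>{..<4} - {i}. d m * (x m)^2)"
    by (rule sum.cong) auto
  also have "\<dots> = diag4 d x - d i * (x i)^2"
    unfolding diag4_def using i by (simp add: sum_diff1)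
  finally show ?thesis
    by (simp only: ac_simps)
qed

text \<open>A solution modulo \<open>p^(f+c)\<close> whose \<open>i\<close>-th term has valuation exactly \<open>f\<close> lifts to all
  powers of \<open>p\<close> by rescaling the \<open>i\<close>-th coordinate alone.\<close>

lemma local_rep_diag4_lift:
  fixes p v :: int
  assumes p: "prime p" and c: "(odd p \<and> 1 \<le> c) \<or> 3 \<le> c" and i: "i < 4"
    and dx: "d i * (x i)^2 = p^f * v" and v: "\<not> p dvd v"
    and xa: "[diag4 d x = a] (mod p^(f + c))"
  shows "local_rep_diag4 p d a"
  unfolding local_rep_diag4_def
proof
  fix k :: nat
  obtain r where r: "a - diag4 d x = p^(f + c) * r"
    using xa by (metis cong_iff_dvd_diff cong_sym dvd_def)
  have "[v + p^c * r = v] (mod p^c)"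
    by (simp add: cong_iff_dvd_diff)
  then obtain w where w: "[v * w^2 = v + p^c * r] (mod p^k)"
    using cong_unit_times_square[OF p c v] by blast
  have "diag4 d (x(i := x i * w)) - a = (diag4 d x - a) + d i * (x i)^2 * (w^2 - 1)"
    using diag4_fun_upd[OF i, of d x "x i * w"] by (simp add: power_mult_distrib algebra_simps)
  also have "\<dots> = p^f * (v * w^2 - (v + p^c * r))"
    using r dx by (simp add: power_add algebra_simps)
  finally have "diag4 d (x(i := x i * w)) - a = p^f * (v * w^2 - (v + p^c * r))" .
  moreover have "p^k dvd v * w^2 - (v + p^c * r)"
    using w by (simp add: cong_iff_dvd_diff)
  ultimately have "[diag4 d (x(i := x i * w)) = a] (mod p^k)"
    by (simp add: cong_iff_dvd_diff)
  then show "\<exists>x. [diag4 d x = a] (mod p^k)" by blast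
qed

lemma placement_term:
  fixes p :: int
  assumes "e \<le> g" "even (g - e)" "d = p^e * u"
  shows "d * (y * p^((g - e) div 2))^2 = p^g * u * y^2"
proof -
  have "d * (y * p^((g - e) div 2))^2 = p^(e + 2 * ((g - e) div 2)) * u * y^2"
    using assms(3) by (simp add: power_mult_distrib power_add power_mult[symmetric] ac_simps)
  also have "e + 2 * ((g - e) div 2) = g"
    using assms(1,2) by simp
  finally show ?thesis .
qed

lemma diag4_placement:
  fixes p :: int
  assumes I: "I \<subseteq> {..<4}"
    and g: "\<And>m. m \<in> I \<Longrightarrow> e m \<le> g m \<and> even (g m - e m) \<and> d m = p^(e m) * u m"
  shows "diag4 d (\<lambda>m. if m \<in> I then y m * p^((g m - e m) div 2) else 0)
          = (\<Sum>m\<in>I. p^(g m) * u m * (y m)^2)"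
proof -
  let ?x = "\<lambda>m. if m \<in> I then y m * p^((g m - e m) div 2) else 0"
  have "diag4 d ?x = (\<Sum>m\<in>I. d m * (?x m)^2)"
    unfolding diag4_def by (rule sum.mono_neutral_right) (use I in auto)
  also have "\<dots> = (\<Sum>m\<in>I. p^(g m) * u m * (y m)^2)"
  proof (rule sum.cong)
    fix m
    assume "m \<in> I"
    then show "d m * (?x m)^2 = p^(g m) * u m * (y m)^2"
      using placement_term[of "e m" "g m" "d m" p "u m" "y m"] g by simp
  qed simp
  finally show ?thesis .
qed

lemma cong_mult_prime_power:
  fixes p x y :: int
  assumes "[x = y] (mod p^c)"
  shows "[p^t * x = p^t * y] (mod p^(t + c))"
  using assms by (simp add: cong_iff_dvd_diff power_add mult_dvd_mono right_diff_distrib[symmetric])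

lemma local_rep_diag4_placement:
  fixes p b :: int
  assumes p: "prime p" and c: "(odd p \<and> 1 \<le> c) \<or> 3 \<le> c"
    and I: "I \<subseteq> {..<4}" and i: "i \<in> I" "h i = 0"
    and placed: "\<And>m. m \<in> I \<Longrightarrow> e m \<le> t + h m \<and> even (t + h m - e m) \<and> d m = p^(e m) * v m"
    and v: "\<not> p dvd v i" and y: "\<not> p dvd y i"
    and sum: "[(\<Sum>m\<in>I. p^(h m) * v m * (y m)^2) = b] (mod p^c)"
  shows "local_rep_diag4 p d (p^t * b)"
proof -
  define x where "x = (\<lambda>m. if m \<in> I then y m * p^((t + h m - e m) div 2) else 0)"
  have "d i * (y i * p^((t + h i - e i) div 2))^2 = p^(t + h i) * v i * (y i)^2"
    using placed[OF i(1)] by (intro placement_term) auto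
  then have "d i * (x i)^2 = p^t * (v i * (y i)^2)"
    using i by (simp add: x_def mult.assoc)
  moreover have "\<not> p dvd v i * (y i)^2"
    using v y p by (simp add: prime_dvd_mult_iff prime_dvd_power_iff)
  moreover have "diag4 d x = p^t * (\<Sum>m\<in>I. p^(h m) * v m * (y m)^2)"
    using diag4_placement[OF I placed, where y = y]
    by (simp add: x_def sum_distrib_left power_add mult.assoc)
  then have "[diag4 d x = p^t * b] (mod p^(t + c))"
    using cong_mult_prime_power[OF sum] by simp
  moreover have "i < 4"
    using I i by auto
  ultimately show ?thesis
    using local_rep_diag4_lift[OF p c] by blast
qed

lemma inj_on_quadratic_mod_prime:
  fixes p b k :: int
  assumes p: "prime p" and b: "\<not> p dvd b"
  shows "inj_on (\<lambda>y. (b * y^2 + k) mod p) {0..(p - 1) div 2}"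
proof (rule inj_onI)
  fix x y
  assume x: "x \<in> {0..(p - 1) div 2}" and y: "y \<in> {0..(p - 1) div 2}"
    and eq: "(b * x^2 + k) mod p = (b * y^2 + k) mod p"
  have "p dvd b * ((x - y) * (x + y))"
    using eq by (simp add: mod_eq_dvd_iff power2_eq_square algebra_simps)
  then have "p dvd x - y \<or> p dvd x + y"
    using p b by (simp add: prime_dvd_mult_iff)
  moreover have "\<bar>x - y\<bar> < p" "\<bar>x + y\<bar> < p"
    using x y by auto
  ultimately have "x - y = 0 \<or> x + y = 0"
    using dvd_imp_le_int[of "x - y" p] dvd_imp_le_int[of "x + y" p] by linarith
  then show "x = y"
    using x y by auto
qed

text \<open>Pigeonhole: \<open>b1 * y1^2\<close> and \<open>c - b2 * y2^2\<close> each take \<open>(p + 1) / 2\<close> values modulo \<open>p\<close>.\<close>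

lemma binary_form_represents_mod_prime:
  fixes p b1 b2 c :: int
  assumes p: "prime p" "odd p" and b: "\<not> p dvd b1" "\<not> p dvd b2"
  shows "\<exists>y1 y2. [b1 * y1^2 + b2 * y2^2 = c] (mod p)"
proof -
  let ?H = "{0..(p - 1) div 2}"
  let ?f1 = "\<lambda>y. (b1 * y^2 + 0) mod p"
  let ?f2 = "\<lambda>y. ((- b2) * y^2 + c) mod p"
  have card_H: "card ?H = nat ((p - 1) div 2 + 1)"
    by simp
  have c1: "card (?f1 ` ?H) = card ?H"
    by (rule card_image[OF inj_on_quadratic_mod_prime[OF p(1) b(1)]])
  have c2: "card (?f2 ` ?H) = card ?H"
    using b(2) by (intro card_image inj_on_quadratic_mod_prime[OF p(1)]) simp
  have "?f1 ` ?H \<inter> ?f2 ` ?H \<noteq> {}"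
  proof
    assume disjoint: "?f1 ` ?H \<inter> ?f2 ` ?H = {}"
    have "card (?f1 ` ?H \<union> ?f2 ` ?H) = 2 * nat ((p - 1) div 2 + 1)"
      using card_Un_disjoint[OF _ _ disjoint] card_H c1 c2 by simp
    also have "\<dots> = nat (p + 1)"
      using p(2) prime_gt_1_int[OF p(1)] by (auto elim!: oddE)
    finally have "card (?f1 ` ?H \<union> ?f2 ` ?H) = nat (p + 1)" .
    moreover have "?f1 ` ?H \<union> ?f2 ` ?H \<subseteq> {0..<p}"
      using prime_gt_0_int[OF p(1)] by auto
    then have "card (?f1 ` ?H \<union> ?f2 ` ?H) \<le> card {0..<p}"
      by (intro card_mono) simp_all
    ultimately show False
      using prime_gt_0_int[OF p(1)] by simp
  qed
  then obtain y1 y2 where "?f1 y1 = ?f2 y2"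
    by auto
  then have "[b1 * y1^2 + b2 * y2^2 = c] (mod p)"
    by (simp add: cong_def mod_eq_dvd_iff algebra_simps)
  then show ?thesis
    by blast
qed

lemma local_rep_diag4_coprime:
  fixes p a :: int
  assumes p: "prime p" and nd: "\<not> p dvd 2 * d 0 * d 1 * d 2"
  shows "local_rep_diag4 p d a"
proof -
  have nd': "\<not> p dvd 2" "\<not> p dvd d 0" "\<not> p dvd d 1" "\<not> p dvd d 2"
    using nd p by (auto simp: prime_dvd_mult_iff)
  then have "odd p"
    using p primes_dvd_imp_eq[of 2 p] by auto
  then obtain y1 y2 where "[d 0 * y1^2 + d 1 * y2^2 = a - d 2] (mod p)"
    using binary_form_represents_mod_prime[OF p _ nd'(2,3)] by blast
  then have "[(\<Sum>m\<in>{0, 1, 2}. p^0 * d m * (if m = 0 then y1 else if m = 1 then y2 else 1)^2) = a]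
      (mod p^1)"
    by (simp add: cong_iff_dvd_diff algebra_simps)
  then have "local_rep_diag4 p d (p^0 * a)"
    using \<open>odd p\<close> nd'(4) p not_prime_unit
    by (intro local_rep_diag4_placement[OF p, where I = "{0, 1, 2}" and i = 2 and c = 1
          and e = "\<lambda>m. 0" and h = "\<lambda>m. 0" and t = 0 and v = d
          and y = "\<lambda>m. if m = 0 then y1 else if m = 1 then y2 else 1"]) auto
  then show ?thesis
    by simp
qed

lemma local_rep_diag4_odd_two_even_gaps:
  fixes p u :: int
  assumes p: "prime p" "odd p"
    and H: "\<And>m. m < 4 \<Longrightarrow> d m = p^(e m) * v m \<and> \<not> p dvd v m \<and> e m < s" and u: "\<not> p dvd u"
    and ij: "i < 4" "j < 4" "i \<noteq> j" and gaps: "even (s - e i)" "even (s - e j)"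
  shows "local_rep_diag4 p d (p^s * u)"
proof -
  obtain y1 y2 where y: "[v i * y1^2 + v j * y2^2 = u] (mod p)"
    using binary_form_represents_mod_prime[OF p] H ij by blast
  let ?y = "\<lambda>m. if m = i then y1 else y2"
  have sum: "[(\<Sum>m\<in>{i, j}. p^0 * v m * (?y m)^2) = u] (mod p^1)"
    using y ij by simp
  have "\<not> p dvd y1 \<or> \<not> p dvd y2"
  proof (rule ccontr)
    assume "\<not> (\<not> p dvd y1 \<or> \<not> p dvd y2)"
    then have "p dvd v i * y1^2 + v j * y2^2"
      by (simp add: power2_eq_square)
    then show False
      using u cong_dvd_iff[OF y] by simp
  qed
  moreover have placed: "\<And>m. m \<in> {i, j} \<Longrightarrow> e m \<le> s + 0 \<and> even (s + 0 - e m) \<and> d m = p^(e m) * v m"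
    using H ij gaps by fastforce
  ultimately show ?thesis
  proof (elim disjE)
    assume "\<not> p dvd y1"
    then show ?thesis
      using p H ij by (intro local_rep_diag4_placement[OF p(1) _ _ _ _ placed _ _ sum, where i = i]) auto
  next
    assume "\<not> p dvd y2"
    then show ?thesis
      using p H ij by (intro local_rep_diag4_placement[OF p(1) _ _ _ _ placed _ _ sum, where i = j]) auto
  qed
qed

lemma local_rep_diag4_odd_three_odd_gaps:
  fixes p u :: int
  assumes p: "prime p" "odd p"
    and H: "\<And>m. m < 4 \<Longrightarrow> d m = p^(e m) * v m \<and> \<not> p dvd v m \<and> e m < s"
    and jkl: "j < 4" "k < 4" "l < 4" "j \<noteq> k" "j \<noteq> l" "k \<noteq> l"
    and gaps: "odd (s - e j)" "odd (s - e k)" "odd (s - e l)"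
  shows "local_rep_diag4 p d (p^s * u)"
proof -
  obtain f where s: "s = Suc f"
    using gaps(1) by (cases s) auto
  obtain y1 y2 where "[v j * y1^2 + v k * y2^2 = - v l] (mod p)"
    using binary_form_represents_mod_prime[OF p] H jkl by blast
  then have sum: "[(\<Sum>m\<in>{j, k, l}. p^0 * v m * (if m = j then y1 else if m = k then y2 else 1)^2)
      = p * u] (mod p^1)"
    using jkl by (simp add: cong_iff_dvd_diff algebra_simps)
  have placed: "\<And>m. m \<in> {j, k, l} \<Longrightarrow> e m \<le> f + 0 \<and> even (f + 0 - e m) \<and> d m = p^(e m) * v m"
    using H jkl gaps s by (fastforce simp: Suc_diff_le)
  have "local_rep_diag4 p d (p^f * (p * u))"
    using p H jkl by (intro local_rep_diag4_placement[OF p(1) _ _ _ _ placed _ _ sum, where i = l]) auto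
  then show ?thesis
    using s by (simp add: ac_simps)
qed

lemma two_or_three_of_four:
  fixes P :: "nat \<Rightarrow> bool"
  shows "(\<exists>i<4. \<exists>j<4. i \<noteq> j \<and> P i \<and> P j) \<or>
    (\<exists>j<4. \<exists>k<4. \<exists>l<4. j \<noteq> k \<and> j \<noteq> l \<and> k \<noteq> l \<and> \<not> P j \<and> \<not> P k \<and> \<not> P l)"
  by (cases "P 0"; cases "P 1"; cases "P 2"; cases "P 3") (simp_all add: numeral_eq_Suc Ex_less_Suc)

lemma local_rep_diag4_odd_prime:
  fixes p u :: int
  assumes p: "prime p" "odd p"
    and H: "\<And>m. m < 4 \<Longrightarrow> d m = p^(e m) * v m \<and> \<not> p dvd v m \<and> e m < s" and u: "\<not> p dvd u"
  shows "local_rep_diag4 p d (p^s * u)"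
  using two_or_three_of_four[of "\<lambda>m. even (s - e m)"]
proof (elim disjE exE conjE)
  fix i j
  assume "i < 4" "j < 4" "i \<noteq> j" "even (s - e i)" "even (s - e j)"
  with H show ?thesis
    by (rule local_rep_diag4_odd_two_even_gaps[OF p _ u])
next
  fix j k l
  assume "j < 4" "k < 4" "l < 4" "j \<noteq> k" "j \<noteq> l" "k \<noteq> l"
    and "\<not> even (s - e j)" "\<not> even (s - e k)" "\<not> even (s - e l)"
  with H show ?thesis
    by (rule local_rep_diag4_odd_three_odd_gaps[OF p])
qed

section \<open>The dyadic case\<close>

lemma even_add_diff_iff:
  fixes e s h :: nat
  assumes "e \<le> s"
  shows "even (s + h - e) \<longleftrightarrow> (even (s - e) \<longleftrightarrow> even h)"
  using assms by (simp add: add_diff_assoc2) blast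

lemma local_rep_diag4_2_two_even_one_odd_gaps:
  fixes u :: int
  assumes H: "\<And>m. m < 4 \<Longrightarrow> d m = 2^(e m) * v m \<and> odd (v m) \<and> e m < s" and u: "odd u"
    and idx: "i < 4" "i' < 4" "j < 4" "i \<noteq> i'" "i \<noteq> j" "i' \<noteq> j"
    and gaps: "even (s - e i)" "even (s - e i')" "odd (s - e j)"
  shows "local_rep_diag4 2 d (2^s * u)"
proof -
  have "odd (v i)" "odd (v i')" "odd (v j)"
    using H idx by auto
  then have "\<exists>a\<in>{0, 1}. \<exists>b\<in>{0, 1}. [v i + 4 * v i' * a + 2 * v j * b = u] (mod 2^3)"
    using u unfolding cong_iff_dvd_diff by (simp; presburger)
  then obtain a b where ab: "a \<in> {0, 1}" "b \<in> {0, 1}"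
    and "[v i + 4 * v i' * a + 2 * v j * b = u] (mod 2^3)"
    by blast
  then have sum: "[(\<Sum>m\<in>{i, i', j}. 2^(if m = i then 0 else if m = i' then 2 else 1) * v m *
      (if m = i then 1 else if m = i' then a else b)^2) = u] (mod 2^3)"
    using idx by (auto simp: algebra_simps)
  have placed: "\<And>m. m \<in> {i, i', j} \<Longrightarrow> e m \<le> s + (if m = i then 0 else if m = i' then 2 else 1) \<and>
      even (s + (if m = i then 0 else if m = i' then 2 else 1) - e m) \<and> d m = 2^(e m) * v m"
  proof -
    fix m
    assume m: "m \<in> {i, i', j}"
    then have "e m < s" "d m = 2^(e m) * v m"
      using H idx by auto
    then show "?thesis m"
      using m idx gaps by (auto simp: even_add_diff_iff simp del: even_diff_nat)
  qed
  show ?thesis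
    using H idx by (intro local_rep_diag4_placement[OF _ _ _ _ _ placed _ _ sum, where i = i]) auto
qed

lemma local_rep_diag4_2_one_even_three_odd_gaps:
  fixes u :: int
  assumes H: "\<And>m. m < 4 \<Longrightarrow> d m = 2^(e m) * v m \<and> odd (v m) \<and> e m < s" and u: "odd u"
    and idx: "i < 4" "j < 4" "k < 4" "l < 4" "i \<noteq> j" "i \<noteq> k" "i \<noteq> l" "j \<noteq> k" "j \<noteq> l" "k \<noteq> l"
    and gaps: "even (s - e i)" "odd (s - e j)" "odd (s - e k)" "odd (s - e l)"
  shows "local_rep_diag4 2 d (2^s * u)"
proof -
  have "odd (v i)" "odd (v j)" "odd (v k)" "odd (v l)"
    using H idx by auto
  then have "\<exists>a\<in>{0, 1}. \<exists>b\<in>{0, 1}. \<exists>c\<in>{0, 1}.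
      [v i + 2 * v j * a + 2 * v k * b + 2 * v l * c = u] (mod 2^3)"
    using u unfolding cong_iff_dvd_diff by (simp; presburger)
  then obtain a b c where "a \<in> {0, 1}" "b \<in> {0, 1}" "c \<in> {0, 1}"
    and "[v i + 2 * v j * a + 2 * v k * b + 2 * v l * c = u] (mod 2^3)"
    by blast
  then have sum: "[(\<Sum>m\<in>{i, j, k, l}. 2^(if m = i then 0 else 1) * v m *
      (if m = i then 1 else if m = j then a else if m = k then b else c)^2) = u] (mod 2^3)"
    using idx by (auto simp: algebra_simps)
  have placed: "\<And>m. m \<in> {i, j, k, l} \<Longrightarrow> e m \<le> s + (if m = i then 0 else 1) \<and>
      even (s + (if m = i then 0 else 1) - e m) \<and> d m = 2^(e m) * v m"
  proof -
    fix m
    assume m: "m \<in> {i, j, k, l}"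
    then have "e m < s" "d m = 2^(e m) * v m"
      using H idx by auto
    then show "?thesis m"
      using m idx gaps by (auto simp: even_add_diff_iff simp del: even_diff_nat)
  qed
  show ?thesis
    using H idx by (intro local_rep_diag4_placement[OF _ _ _ _ _ placed _ _ sum, where i = i]) auto
qed

lemma local_rep_diag4_2_even_gaps_cong_4:
  fixes u :: int
  assumes H: "\<And>m. m < 4 \<Longrightarrow> d m = 2^(e m) * v m \<and> odd (v m) \<and> e m < s" and u: "odd u"
    and idx: "i < 4" "i' < 4" "i \<noteq> i'" and gaps: "even (s - e i)" "even (s - e i')"
    and cong: "[v i = u] (mod 4)"
  shows "local_rep_diag4 2 d (2^s * u)"
proof -
  have "odd (v i')"
    using H idx by auto
  then have "\<exists>a\<in>{0, 1}. [v i + 4 * v i' * a = u] (mod 2^3)"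
    using cong unfolding cong_iff_dvd_diff by (simp; presburger)
  then obtain a where "a \<in> {0, 1}" and "[v i + 4 * v i' * a = u] (mod 2^3)"
    by blast
  then have sum: "[(\<Sum>m\<in>{i, i'}. 2^(if m = i then 0 else 2) * v m * (if m = i then 1 else a)^2) = u]
      (mod 2^3)"
    using idx by (auto simp: algebra_simps)
  have placed: "\<And>m. m \<in> {i, i'} \<Longrightarrow> e m \<le> s + (if m = i then 0 else 2) \<and>
      even (s + (if m = i then 0 else 2) - e m) \<and> d m = 2^(e m) * v m"
  proof -
    fix m
    assume m: "m \<in> {i, i'}"
    then have "e m < s" "d m = 2^(e m) * v m"
      using H idx by auto
    then show "?thesis m"
      using m idx gaps by (auto simp: even_add_diff_iff simp del: even_diff_nat)
  qed
  show ?thesis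
    using H idx by (intro local_rep_diag4_placement[OF _ _ _ _ _ placed _ _ sum, where i = i]) auto
qed

lemma local_rep_diag4_2_even_gaps_not_cong_4:
  fixes u :: int
  assumes H: "\<And>m. m < 4 \<Longrightarrow> d m = 2^(e m) * v m \<and> odd (v m) \<and> e m < s" and u: "odd u"
    and gaps: "\<And>m. m < 4 \<Longrightarrow> even (s - e m)"
    and ncong: "\<And>m. m < 3 \<Longrightarrow> \<not> [v m = u] (mod 4)"
  shows "local_rep_diag4 2 d (2^s * u)"
proof -
  have "odd (v 0)" "odd (v 1)" "odd (v 2)" "odd (v 3)"
    using H by auto
  moreover have "\<not> 4 dvd v 0 - u" "\<not> 4 dvd v 1 - u" "\<not> 4 dvd v 2 - u"
    using ncong[of 0] ncong[of 1] ncong[of 2] by (simp_all add: cong_iff_dvd_diff)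
  \<comment> \<open>each \<open>v m\<close> is \<open>-u\<close> modulo 4, hence \<open>v 0 + v 1 + v 2 \<equiv> -3u \<equiv> u\<close>\<close>
  ultimately have "\<exists>a\<in>{0, 1}. [v 0 + v 1 + v 2 + 4 * v 3 * a = u] (mod 2^3)"
    using u unfolding cong_iff_dvd_diff by (simp; presburger)
  then obtain a where "a \<in> {0, 1}" and "[v 0 + v 1 + v 2 + 4 * v 3 * a = u] (mod 2^3)"
    by blast
  then have sum: "[(\<Sum>m\<in>{0, 1, 2, 3}. 2^(if m = 3 then 2 else 0) * v m * (if m = 3 then a else 1)^2) = u]
      (mod 2^3)"
    by (auto simp: algebra_simps)
  have placed: "\<And>m. m \<in> {0, 1, 2, 3} \<Longrightarrow> e m \<le> s + (if m = 3 then 2 else 0) \<and>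
      even (s + (if m = 3 then 2 else 0) - e m) \<and> d m = 2^(e m) * v m"
  proof -
    fix m :: nat
    assume m: "m \<in> {0, 1, 2, 3}"
    then have "e m < s" "d m = 2^(e m) * v m" "even (s - e m)"
      using H gaps by (auto simp del: even_diff_nat)
    then show "?thesis m"
      by (auto simp: even_add_diff_iff simp del: even_diff_nat)
  qed
  show ?thesis
    using H by (intro local_rep_diag4_placement[OF _ _ _ _ _ placed _ _ sum, where i = 0]) auto
qed

lemma local_rep_diag4_2_odd_gaps:
  fixes u :: int
  assumes H: "\<And>m. m < 4 \<Longrightarrow> d m = 2^(e m) * v m \<and> odd (v m) \<and> e m < s" and u: "odd u"
    and idx: "i < 4" "j < 4" "k < 4" "i \<noteq> j" "i \<noteq> k" "j \<noteq> k"
    and gaps: "odd (s - e i)" "odd (s - e j)" "odd (s - e k)" and cong: "[v i = v j] (mod 4)"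
  shows "local_rep_diag4 2 d (2^s * u)"
proof -
  obtain f where s: "s = Suc f"
    using gaps(1) by (cases s) auto
  have "odd (v i)" "odd (v j)" "odd (v k)"
    using H idx by auto
  then have "\<exists>a\<in>{0, 1}. [v i + v j + 4 * v k * a = 2 * u] (mod 2^3)"
    using u cong unfolding cong_iff_dvd_diff by (simp; presburger)
  then obtain a where "a \<in> {0, 1}" and "[v i + v j + 4 * v k * a = 2 * u] (mod 2^3)"
    by blast
  then have sum: "[(\<Sum>m\<in>{i, j, k}. 2^(if m = k then 2 else 0) * v m * (if m = k then a else 1)^2) = 2 * u]
      (mod 2^3)"
    using idx by (auto simp: algebra_simps)
  have placed: "\<And>m. m \<in> {i, j, k} \<Longrightarrow> e m \<le> f + (if m = k then 2 else 0) \<and>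
      even (f + (if m = k then 2 else 0) - e m) \<and> d m = 2^(e m) * v m"
  proof -
    fix m
    assume m: "m \<in> {i, j, k}"
    then have "e m < Suc f" "d m = 2^(e m) * v m"
      using H idx s by auto
    moreover have "odd (Suc f - e m)"
      using m gaps s by (auto simp del: even_diff_nat)
    ultimately show "?thesis m"
      by (auto simp: even_add_diff_iff Suc_diff_le simp del: even_diff_nat)
  qed
  have "local_rep_diag4 2 d (2^f * (2 * u))"
    using H idx by (intro local_rep_diag4_placement[OF _ _ _ _ _ placed _ _ sum, where i = i]) auto
  then show ?thesis
    using s by (simp add: ac_simps)
qed

lemma two_one_or_one_three_or_constant_of_four:
  fixes P :: "nat \<Rightarrow> bool"
  shows "(\<exists>i<4. \<exists>i'<4. \<exists>j<4. i \<noteq> i' \<and> i \<noteq> j \<and> i' \<noteq> j \<and> P i \<and> P i' \<and> \<not> P j) \<or>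
    (\<exists>i<4. \<exists>j<4. \<exists>k<4. \<exists>l<4. i \<noteq> j \<and> i \<noteq> k \<and> i \<noteq> l \<and> j \<noteq> k \<and> j \<noteq> l \<and> k \<noteq> l \<and>
      P i \<and> \<not> P j \<and> \<not> P k \<and> \<not> P l) \<or>
    (\<forall>m<4. P m) \<or> (\<forall>m<4. \<not> P m)"
  by (cases "P 0"; cases "P 1"; cases "P 2"; cases "P 3")
    (simp_all add: numeral_eq_Suc Ex_less_Suc All_less_Suc)

lemma local_rep_diag4_2:
  fixes u :: int
  assumes H: "\<And>m. m < 4 \<Longrightarrow> d m = 2^(e m) * v m \<and> odd (v m) \<and> e m < s" and u: "odd u"
  shows "local_rep_diag4 2 d (2^s * u)"
  using two_one_or_one_three_or_constant_of_four[of "\<lambda>m. even (s - e m)"]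
proof (elim disjE exE conjE)
  fix i i' j
  assume "i < 4" "i' < 4" "j < 4" "i \<noteq> i'" "i \<noteq> j" "i' \<noteq> j"
    and "even (s - e i)" "even (s - e i')" "\<not> even (s - e j)"
  with H show ?thesis
    by (rule local_rep_diag4_2_two_even_one_odd_gaps[OF _ u])
next
  fix i j k l
  assume "i < 4" "j < 4" "k < 4" "l < 4" "i \<noteq> j" "i \<noteq> k" "i \<noteq> l" "j \<noteq> k" "j \<noteq> l" "k \<noteq> l"
    and "even (s - e i)" "\<not> even (s - e j)" "\<not> even (s - e k)" "\<not> even (s - e l)"
  with H show ?thesis
    by (rule local_rep_diag4_2_one_even_three_odd_gaps[OF _ u])
next
  assume even_gaps: "\<forall>m<4. even (s - e m)"
  show ?thesis
  proof (cases "\<exists>i<3. [v i = u] (mod 4)")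
    case True
    then obtain i where "i < 3" "[v i = u] (mod 4)"
      by blast
    moreover have "i < 4" "3 < (4::nat)" "i \<noteq> 3"
      using \<open>i < 3\<close> by auto
    ultimately show ?thesis
      using H even_gaps
      by (intro local_rep_diag4_2_even_gaps_cong_4[OF _ u, where i' = 3]) (auto simp del: even_diff_nat)
  next
    case False
    with H show ?thesis
      using even_gaps by (intro local_rep_diag4_2_even_gaps_not_cong_4[OF _ u]) auto
  qed
next
  assume odd_gaps: "\<forall>m<4. \<not> even (s - e m)"
  have "odd (v 0)" "odd (v 1)" "odd (v 2)"
    using H by auto
  then have "[v 0 = v 1] (mod 4) \<or> [v 0 = v 2] (mod 4) \<or> [v 1 = v 2] (mod 4)"
    unfolding cong_iff_dvd_diff by presburger
  then show ?thesis
  proof (elim disjE)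
    assume "[v 0 = v 1] (mod 4)"
    with H show ?thesis
      using odd_gaps by (intro local_rep_diag4_2_odd_gaps[OF _ u, where i = 0 and j = 1 and k = 2])
        (auto simp del: even_diff_nat)
  next
    assume "[v 0 = v 2] (mod 4)"
    with H show ?thesis
      using odd_gaps by (intro local_rep_diag4_2_odd_gaps[OF _ u, where i = 0 and j = 2 and k = 1])
        (auto simp del: even_diff_nat)
  next
    assume "[v 1 = v 2] (mod 4)"
    with H show ?thesis
      using odd_gaps by (intro local_rep_diag4_2_odd_gaps[OF _ u, where i = 1 and j = 2 and k = 0])
        (auto simp del: even_diff_nat)
  qed
qed

section \<open>Large valuations and good primes\<close>

lemma multiplicity_cong:
  fixes p a r :: int
  assumes p: "prime p" and r: "r \<noteq> 0" and k: "multiplicity p r < k" and ar: "[a = r] (mod p^k)"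
  shows "a \<noteq> 0 \<and> multiplicity p a = multiplicity p r"
proof -
  define t where "t = multiplicity p r"
  have nonunit: "\<not> is_unit p"
    using p not_prime_unit by blast
  have ar': "p^Suc t dvd a - r"
    using ar k unfolding t_def cong_iff_dvd_diff by (meson Suc_leI dvd_trans le_imp_power_dvd)
  have r_dvd: "p^t dvd r"
    unfolding t_def by (rule multiplicity_dvd)
  have r_ndvd: "\<not> p^Suc t dvd r"
    unfolding t_def using power_dvd_iff_le_multiplicity[OF r nonunit, of "Suc t"] t_def by simp
  have "p^t dvd (a - r) + r"
    using ar' r_dvd by (intro dvd_add) (auto intro: dvd_trans[OF le_imp_power_dvd])
  then have "p^t dvd a"
    by simp
  moreover have "\<not> p^Suc t dvd a"
  proof
    assume "p^Suc t dvd a"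
    then have "p^Suc t dvd a - (a - r)"
      using ar' by (rule dvd_diff)
    with r_ndvd show False
      by simp
  qed
  ultimately show ?thesis
    unfolding t_def by (auto intro: multiplicity_eqI)
qed

lemma multiplicity_less_self:
  fixes p x :: int
  assumes p: "prime p" and x: "x > 0"
  shows "int (multiplicity p x) < x"
proof -
  have "int (multiplicity p x) < 2^multiplicity p x"
    by (metis of_nat_less_iff of_nat_numeral of_nat_power less_exp)
  also have "\<dots> \<le> p^multiplicity p x"
    using prime_ge_2_int[OF p] by (intro power_mono) auto
  also have "\<dots> \<le> x"
    using x by (intro zdvd_imp_le multiplicity_dvd)
  finally show ?thesis .
qed

lemma local_rep_diag4_of_multiplicity_less:
  fixes p a :: int
  assumes p: "prime p" and a: "a \<noteq> 0"
    and d: "\<And>m. m < 4 \<Longrightarrow> d m \<noteq> 0 \<and> multiplicity p (d m) < multiplicity p a"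
  shows "local_rep_diag4 p d a"
proof -
  have nonunit: "\<not> is_unit p"
    using p not_prime_unit by blast
  define s where "s = multiplicity p a"
  obtain u where a_eq: "a = p^s * u" and u: "\<not> p dvd u"
    unfolding s_def using multiplicity_decompose'[OF a nonunit] by blast
  define e where "e m = multiplicity p (d m)" for m
  define v where "v m = d m div p^(e m)" for m
  have H: "d m = p^(e m) * v m \<and> \<not> p dvd v m \<and> e m < s" if "m < 4" for m
    using d[OF that] multiplicity_decompose[OF _ nonunit, of "d m"] multiplicity_dvd[of p "d m"]
    unfolding e_def v_def s_def by simp
  show ?thesis
  proof (cases "p = 2")
    case True
    then show ?thesis
      using H u local_rep_diag4_2[of d e v s u] a_eq by simp
  next
    case False
    then have "odd p"
      using p prime_odd_int[of p] prime_ge_2_int[of p] by fastforce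
    with p H u show ?thesis
      unfolding a_eq by (intro local_rep_diag4_odd_prime) auto
  qed
qed

lemma local_rep_diag4_of_multiplicity_ge:
  fixes p a :: int
  assumes p: "prime p" and a: "a \<noteq> 0" and d: "\<And>m. m < 4 \<Longrightarrow> d m > 0"
    and large: "nat (d 0 + d 1 + d 2 + d 3) \<le> multiplicity p a"
  shows "local_rep_diag4 p d a"
proof (rule local_rep_diag4_of_multiplicity_less[OF p a])
  fix m :: nat
  assume m: "m < 4"
  have "d m \<le> d 0 + d 1 + d 2 + d 3"
    using m d[of 0] d[of 1] d[of 2] d[of 3] by (auto simp: numeral_eq_Suc less_Suc_eq)
  then show "d m \<noteq> 0 \<and> multiplicity p (d m) < multiplicity p a"
    using multiplicity_less_self[OF p d[OF m]] d[OF m] large by auto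
qed

lemma prime_le_of_not_local_rep_diag4:
  fixes p :: int
  assumes p: "prime p" and d: "\<And>m. m < 4 \<Longrightarrow> d m > 0" and nrep: "\<not> local_rep_diag4 p d a"
  shows "p \<le> 2 * d 0 * d 1 * d 2"
proof (rule zdvd_imp_le)
  show "p dvd 2 * d 0 * d 1 * d 2"
    using local_rep_diag4_coprime[OF p] nrep by blast
  show "0 < 2 * d 0 * d 1 * d 2"
    using d[of 0] d[of 1] d[of 2] by simp
qed

section \<open>Orthogonal vectors in the lattice\<close>

lemma bil_diff_right: "bil n G y (\<lambda>j. f j - g j) = bil n G y f - bil n G y g"
  by (simp add: bil_def algebra_simps sum_subtractf)

lemma bil_smult_left: "bil n G (\<lambda>j. c * f j) y = c * bil n G f y"
  by (simp add: bil_def sum_distrib_left algebra_simps)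

lemma bil_smult_right: "bil n G y (\<lambda>j. c * f j) = c * bil n G y f"
  by (simp add: bil_def sum_distrib_left algebra_simps)

lemma bil_sum_left: "bil n G (\<lambda>j. \<Sum>i\<in>I. c i * f i j) y = (\<Sum>i\<in>I. c i * bil n G (f i) y)"
  by (simp add: bil_def sum_distrib_left sum_distrib_right algebra_simps sum.swap[of _ I])

lemma bil_sum_right: "bil n G y (\<lambda>j. \<Sum>i\<in>I. c i * f i j) = (\<Sum>i\<in>I. c i * bil n G y (f i))"
  by (simp add: bil_def sum_distrib_left sum_distrib_right algebra_simps sum.swap[of _ I])

lemma bil_sym:
  assumes "sym_gram n G"
  shows "bil n G x y = bil n G y x"
proof -
  have "bil n G x y = (\<Sum>i<n. \<Sum>j<n. G j i * x i * y j)"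
    unfolding bil_def using assms unfolding sym_gram_def by (intro sum.cong refl) auto
  also have "\<dots> = bil n G y x"
    unfolding bil_def by (subst sum.swap) (simp add: ac_simps)
  finally show ?thesis .
qed

lemma quad_smult: "quad n G (\<lambda>j. c * x j) = c^2 * quad n G x"
  unfolding quad_def by (simp add: bil_smult_left bil_smult_right power2_eq_square)

lemma bil_orthogonal_sum_right:
  assumes I: "finite I" "i \<in> I" and orth: "\<And>i'. i' \<in> I \<Longrightarrow> i' \<noteq> i \<Longrightarrow> bil n G (w i) (w i') = 0"
  shows "bil n G (w i) (\<lambda>j. \<Sum>i'\<in>I. c i' * w i' j) = c i * bil n G (w i) (w i)"
proof -
  have "bil n G (w i) (\<lambda>j. \<Sum>i'\<in>I. c i' * w i' j) = (\<Sum>i'\<in>I. c i' * bil n G (w i) (w i'))"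
    by (rule bil_sum_right)
  also have "\<dots> = (\<Sum>i'\<in>{i}. c i' * bil n G (w i) (w i'))"
    using I orth by (intro sum.mono_neutral_right) auto
  finally show ?thesis
    by simp
qed

lemma quad_orthogonal_sum:
  fixes k :: nat
  assumes orth: "\<And>i i'. i < k \<Longrightarrow> i' < k \<Longrightarrow> i \<noteq> i' \<Longrightarrow> bil n G (w i) (w i') = 0"
  shows "quad n G (\<lambda>j. \<Sum>i<k. x i * w i j) = (\<Sum>i<k. quad n G (w i) * (x i)^2)"
proof -
  have "quad n G (\<lambda>j. \<Sum>i<k. x i * w i j) = (\<Sum>i<k. x i * bil n G (w i) (\<lambda>j. \<Sum>i'<k. x i' * w i' j))"
    unfolding quad_def by (rule bil_sum_left)
  also have "\<dots> = (\<Sum>i<k. quad n G (w i) * (x i)^2)"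
  proof (rule sum.cong[OF refl])
    fix i
    assume "i \<in> {..<k}"
    then have "bil n G (w i) (\<lambda>j. \<Sum>i'<k. x i' * w i' j) = x i * quad n G (w i)"
      unfolding quad_def using orth by (intro bil_orthogonal_sum_right) auto
    then show "x i * bil n G (w i) (\<lambda>j. \<Sum>i'<k. x i' * w i' j) = quad n G (w i) * (x i)^2"
      by (simp add: power2_eq_square)
  qed
  finally show ?thesis .
qed

lemma quad_pos:
  assumes "pos_def n G" "i < n" "x i \<noteq> 0"
  shows "quad n G x > 0"
  using assms unfolding pos_def_def by blast

text \<open>One step of Gram--Schmidt without denominators: the new vector is \<open>c * e\<^sub>k\<close> minus its
  projections onto the \<open>w i\<close>, scaled by \<open>c = \<Prod>i<k. Q(w i)\<close> so that all coefficients are integers.\<close>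

lemma orthogonal_family_extend:
  fixes w :: "nat \<Rightarrow> nat \<Rightarrow> int"
  assumes pd: "pos_def n G" and k: "k < n"
    and tri: "\<And>i. i < k \<Longrightarrow> w i i \<noteq> 0 \<and> (\<forall>j>i. w i j = 0)"
    and orth: "\<And>i i'. i < k \<Longrightarrow> i' < k \<Longrightarrow> i \<noteq> i' \<Longrightarrow> bil n G (w i) (w i') = 0"
  shows "\<exists>x. (\<forall>i<k. bil n G (w i) x = 0) \<and> x k \<noteq> 0 \<and> (\<forall>j>k. x j = 0)"
proof -
  define c where "c = (\<Prod>i<k. quad n G (w i))"
  define ek where "ek = (\<lambda>j. if j = k then 1 else 0 :: int)"
  define coef where "coef i = c div quad n G (w i) * bil n G (w i) ek" for i
  define x where "x = (\<lambda>j. c * ek j - (\<Sum>i<k. coef i * w i j))"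
  have q: "quad n G (w i) > 0" if "i < k" for i
    using quad_pos[OF pd, of i] tri that k by simp
  have "bil n G (w i) x = 0" if i: "i < k" for i
  proof -
    have "quad n G (w i) dvd c"
      unfolding c_def using i by (intro dvd_prodI) auto
    then have "coef i * quad n G (w i) = c * bil n G (w i) ek"
      unfolding coef_def by simp
    moreover have "bil n G (w i) (\<lambda>j. \<Sum>i'<k. coef i' * w i' j) = coef i * quad n G (w i)"
      unfolding quad_def using i orth by (intro bil_orthogonal_sum_right) auto
    ultimately show ?thesis
      unfolding x_def by (simp add: bil_diff_right bil_smult_right)
  qed
  moreover have "c \<noteq> 0"
    unfolding c_def using q by (fastforce simp: prod_zero_iff)
  then have "x k \<noteq> 0"
    using tri by (simp add: x_def ek_def)
  moreover have "\<forall>j>k. x j = 0"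
    using tri by (simp add: x_def ek_def)
  ultimately show ?thesis
    by blast
qed

lemma triangular_orthogonal_family_exists:
  assumes "k \<le> n" and sg: "sym_gram n G" and pd: "pos_def n G"
  shows "\<exists>w. (\<forall>i<k. w i i \<noteq> 0 \<and> (\<forall>j>i. w i j = 0)) \<and>
    (\<forall>i<k. \<forall>i'<k. i \<noteq> i' \<longrightarrow> bil n G (w i) (w i') = 0)"
  using assms(1)
proof (induction k)
  case 0
  show ?case
    by simp
next
  case (Suc k)
  then obtain w where tri: "\<forall>i<k. w i i \<noteq> 0 \<and> (\<forall>j>i. w i j = 0)"
    and orth: "\<forall>i<k. \<forall>i'<k. i \<noteq> i' \<longrightarrow> bil n G (w i) (w i') = 0"
    by auto
  obtain x where x: "\<forall>i<k. bil n G (w i) x = 0" "x k \<noteq> 0" "\<forall>j>k. x j = 0"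
    using orthogonal_family_extend[OF pd, of k w] Suc.prems tri orth by auto
  have "bil n G x (w i) = 0" if "i < k" for i
    using x(1) that bil_sym[OF sg] by metis
  then show ?case
    using tri orth x by (intro exI[of _ "w(k := x)"]) (auto simp: less_Suc_eq)
qed

lemma orthogonal_family_exists:
  assumes "k \<le> n" "sym_gram n G" "pos_def n G"
  shows "\<exists>w. (\<forall>i<k. \<forall>i'<k. i \<noteq> i' \<longrightarrow> bil n G (w i) (w i') = 0) \<and> (\<forall>i<k. quad n G (w i) > 0)"
proof -
  obtain w where "\<forall>i<k. w i i \<noteq> 0 \<and> (\<forall>j>i. w i j = 0)"
    and "\<forall>i<k. \<forall>i'<k. i \<noteq> i' \<longrightarrow> bil n G (w i) (w i') = 0"
    using triangular_orthogonal_family_exists[OF assms] by blast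
  then show ?thesis
    using quad_pos[OF assms(3)] assms(1) by (metis order_less_le_trans)
qed

lemma local_rep_of_local_rep_diag4:
  assumes orth: "\<And>i i'. i < 4 \<Longrightarrow> i' < 4 \<Longrightarrow> i \<noteq> i' \<Longrightarrow> bil n G (w i) (w i') = 0"
    and rep: "local_rep_diag4 p (\<lambda>i. quad n G (w i)) a"
  shows "local_rep n G p a"
  unfolding local_rep_def
proof
  fix k :: nat
  obtain x where "[diag4 (\<lambda>i. quad n G (w i)) x = a] (mod p^k)"
    using rep unfolding local_rep_diag4_def by blast
  then have "[quad n G (\<lambda>j. \<Sum>i<4. x i * w i j) = a] (mod p^k)"
    by (simp add: quad_orthogonal_sum[OF orth] diag4_def)
  then show "\<exists>x. [quad n G x = a] (mod p^k)"
    by blast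
qed

text \<open>If \<open>b \<equiv> a\<close> modulo \<open>p^(\<nu>\<^sub>p(a) + 3)\<close> then \<open>b / a\<close> is a \<open>p\<close>-adic unit square.\<close>

lemma local_rep_cong:
  fixes p a b :: int
  assumes p: "prime p" and a: "a \<noteq> 0" and ba: "[b = a] (mod p^(multiplicity p a + 3))"
    and rep: "local_rep n G p a"
  shows "local_rep n G p b"
  unfolding local_rep_def
proof
  fix k :: nat
  define t where "t = multiplicity p a"
  obtain a' where a': "a = p^t * a'" "\<not> p dvd a'"
    unfolding t_def using multiplicity_decompose'[OF a] p not_prime_unit by blast
  obtain r where "b - a = p^(t + 3) * r"
    using ba unfolding t_def by (metis cong_iff_dvd_diff dvd_def)
  then have b: "b = p^t * (a' + p^3 * r)"
    using a' by (simp add: algebra_simps power_add)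
  have "[a' + p^3 * r = a'] (mod p^3)"
    by (simp add: cong_iff_dvd_diff)
  then obtain w where w: "[a' * w^2 = a' + p^3 * r] (mod p^k)"
    using cong_unit_times_square[where c = 3, OF p _ a'(2)] by auto
  obtain x where x: "[quad n G x = a] (mod p^(t + k))"
    using rep unfolding local_rep_def by blast
  have "quad n G (\<lambda>j. w * x j) - b = w^2 * (quad n G x - a) + p^t * (a' * w^2 - (a' + p^3 * r))"
    using a' b by (simp add: quad_smult algebra_simps)
  moreover have "p^(t + k) dvd w^2 * (quad n G x - a)"
    using x by (simp add: cong_iff_dvd_diff)
  moreover have "p^(t + k) dvd p^t * (a' * w^2 - (a' + p^3 * r))"
    using w by (simp add: cong_iff_dvd_diff power_add mult_dvd_mono)
  ultimately have "p^(t + k) dvd quad n G (\<lambda>j. w * x j) - b"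
    by simp
  then have "[quad n G (\<lambda>j. w * x j) = b] (mod p^k)"
    unfolding cong_iff_dvd_diff by (rule dvd_trans[rotated]) (simp add: le_imp_power_dvd)
  then show "\<exists>x. [quad n G x = b] (mod p^k)"
    by blast
qed

section \<open>Exceptional sets as unions of progressions\<close>

lemma mem_AP_iff:
  fixes a b m :: int
  assumes "m > 0"
  shows "b \<in> AP a m \<longleftrightarrow> a \<le> b \<and> [b = a] (mod m)"
proof
  assume "b \<in> AP a m"
  then show "a \<le> b \<and> [b = a] (mod m)"
    using assms by (auto simp: AP_def cong_iff_dvd_diff)
next
  assume "a \<le> b \<and> [b = a] (mod m)"
  then obtain q where q: "b - a = m * q" and "a \<le> b"
    by (auto simp: cong_iff_dvd_diff elim: dvdE)
  then have "q \<ge> 0"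
    using assms by (metis diff_ge_0_iff_ge zero_le_mult_iff not_less)
  then have "b = a + m * int (nat q)"
    using q by simp
  then show "b \<in> AP a m"
    unfolding AP_def by blast
qed

lemma admissible_prime_power:
  fixes p r :: int
  assumes p: "prime p" and r: "0 < r" "r < p^k" and mult: "multiplicity p r < k"
  shows "admissible r (p^k)"
  unfolding admissible_def
proof (intro conjI allI impI)
  fix q :: int
  assume "prime q" "q dvd p^k"
  then have "q = p"
    using p by (meson prime_dvd_power primes_dvd_imp_eq)
  then show "multiplicity q r < multiplicity q (p^k)"
    using mult multiplicity_prime_power[OF prime_imp_prime_elem[OF p]] by simp
qed (use r in auto)

definition local_exception_classes :: "(int \<Rightarrow> int \<Rightarrow> bool) \<Rightarrow> int \<Rightarrow> nat \<Rightarrow> (int \<times> int) set" where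
  "local_exception_classes R D T = {(r, p^(t + 3)) | p t r. prime p \<and> p \<le> D \<and> t < T \<and>
     0 < r \<and> r < p^(t + 3) \<and> multiplicity p r = t \<and> \<not> R p r}"

lemma finite_local_exception_classes: "finite (local_exception_classes R D T)"
proof (rule finite_subset)
  show "local_exception_classes R D T \<subseteq> {0..D^(T + 3)} \<times> {0..D^(T + 3)}"
  proof
    fix z
    assume "z \<in> local_exception_classes R D T"
    then obtain p t r where z: "z = (r, p^(t + 3))" and p: "prime p" "p \<le> D"
      and t: "t < T" and r: "0 < r" "r < p^(t + 3)"
      unfolding local_exception_classes_def by blast
    have "p^(t + 3) \<le> D^(t + 3)"
      using p prime_ge_2_int[OF p(1)] by (intro power_mono) auto
    also have "\<dots> \<le> D^(T + 3)"
      using p prime_ge_2_int[OF p(1)] t by (intro power_increasing) auto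
    finally show "z \<in> {0..D^(T + 3)} \<times> {0..D^(T + 3)}"
      using z r by auto
  qed
qed simp

lemma admissible_local_exception_classes:
  "(r, m) \<in> local_exception_classes R D T \<Longrightarrow> admissible r m"
  unfolding local_exception_classes_def by (auto intro: admissible_prime_power)

lemma exceptions_eq_Union_local_exception_classes:
  fixes R :: "int \<Rightarrow> int \<Rightarrow> bool" and D :: int and T :: nat
  assumes cong: "\<And>p a b. prime p \<Longrightarrow> a \<noteq> 0 \<Longrightarrow> [b = a] (mod p^(multiplicity p a + 3)) \<Longrightarrow> R p a \<Longrightarrow> R p b"
    and bad_prime: "\<And>p a. prime p \<Longrightarrow> \<not> R p a \<Longrightarrow> p \<le> D"
    and large_multiplicity: "\<And>p a. prime p \<Longrightarrow> a \<noteq> 0 \<Longrightarrow> T \<le> multiplicity p a \<Longrightarrow> R p a"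
  shows "{a. a > 0 \<and> (\<exists>p. prime p \<and> \<not> R p a)} = (\<Union>(r, m)\<in>local_exception_classes R D T. AP r m)"
proof -
  have cong_iff: "R p a \<longleftrightarrow> R p b"
    if p: "prime p" and b: "b \<noteq> 0" and ab: "[a = b] (mod p^(multiplicity p b + 3))" for p a b
  proof -
    have "a \<noteq> 0" "multiplicity p a = multiplicity p b"
      using multiplicity_cong[OF p b _ ab] by auto
    then have "[b = a] (mod p^(multiplicity p a + 3))"
      using cong_sym[OF ab] by simp
    then show ?thesis
      using cong[OF p b ab] cong[OF p \<open>a \<noteq> 0\<close>] by blast
  qed
  show ?thesis
  proof (intro equalityI subsetI)
    fix a
    assume "a \<in> {a. a > 0 \<and> (\<exists>p. prime p \<and> \<not> R p a)}"
    then obtain p where a: "a > 0" and p: "prime p" and nrep: "\<not> R p a"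
      by blast
    define t where "t = multiplicity p a"
    define r where "r = a mod p^(t + 3)"
    have m: "p^(t + 3) > 0"
      using prime_gt_0_int[OF p] by simp
    have ra: "[r = a] (mod p^(t + 3))"
      unfolding r_def by (simp add: cong_def)
    then have r: "r \<noteq> 0" "multiplicity p r = t"
      using multiplicity_cong[OF p _ _ ra] a unfolding t_def by auto
    have "(r, p^(t + 3)) \<in> local_exception_classes R D T"
      unfolding local_exception_classes_def
    proof (intro CollectI exI conjI)
      show "t < T"
        using large_multiplicity[OF p, of a] a nrep unfolding t_def by (metis not_le less_irrefl)
      show "\<not> R p r"
        using cong_iff[OF p _ ra[unfolded t_def]] a nrep by auto
      show "0 < r" "r < p^(t + 3)"
        using r pos_mod_sign[OF m, of a] pos_mod_bound[OF m, of a] unfolding r_def by auto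
    qed (use p bad_prime[OF p nrep] r in auto)
    moreover have "a \<in> AP r (p^(t + 3))"
      using ra m a unfolding r_def by (simp add: mem_AP_iff cong_sym zmod_le_nonneg_dividend)
    ultimately show "a \<in> (\<Union>(r, m)\<in>local_exception_classes R D T. AP r m)"
      by blast
  next
    fix a
    assume "a \<in> (\<Union>(r, m)\<in>local_exception_classes R D T. AP r m)"
    then obtain p t r where p: "prime p" and r: "0 < r" "multiplicity p r = t" "\<not> R p r"
      and a: "a \<in> AP r (p^(t + 3))"
      unfolding local_exception_classes_def by blast
    then have "r \<le> a" "[a = r] (mod p^(multiplicity p r + 3))"
      using prime_gt_0_int[OF p] mem_AP_iff[of "p^(t + 3)" a r] by auto
    then show "a \<in> {a. a > 0 \<and> (\<exists>p. prime p \<and> \<not> R p a)}"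
      using cong_iff[OF p _ \<open>[a = r] (mod _)\<close>] p r by auto
  qed
qed

theorem proposition1:
  fixes n :: nat and G :: "nat \<Rightarrow> nat \<Rightarrow> int"
  assumes "n \<ge> 4" and "sym_gram n G" and "pos_def n G" and "scale_one n G"
  shows "\<exists>S :: (int \<times> int) set. finite S \<and> (\<forall>(a, m)\<in>S. admissible a m) \<and>
           exceptions_gen n G = (\<Union>(a, m)\<in>S. AP a m)"
proof -
  obtain w :: "nat \<Rightarrow> nat \<Rightarrow> int"
    where orth: "\<And>i i'. i < 4 \<Longrightarrow> i' < 4 \<Longrightarrow> i \<noteq> i' \<Longrightarrow> bil n G (w i) (w i') = 0"
      and pos: "\<And>i. i < 4 \<Longrightarrow> quad n G (w i) > 0"
    using orthogonal_family_exists[OF assms(1-3)] by blast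
  define d where "d i = quad n G (w i)" for i
  have d: "\<And>m. m < 4 \<Longrightarrow> d m > 0"
    using pos unfolding d_def .
  have diag: "\<And>p a. local_rep_diag4 p d a \<Longrightarrow> local_rep n G p a"
    unfolding d_def by (rule local_rep_of_local_rep_diag4[OF orth])
  define S where
    "S = local_exception_classes (local_rep n G) (2 * d 0 * d 1 * d 2) (nat (d 0 + d 1 + d 2 + d 3))"
  have "exceptions_gen n G = {a. a > 0 \<and> (\<exists>p. prime p \<and> \<not> local_rep n G p a)}"
    unfolding exceptions_gen_def gen_rep_def by blast
  also have "\<dots> = (\<Union>(r, m)\<in>S. AP r m)"
    unfolding S_def
  proof (rule exceptions_eq_Union_local_exception_classes)
    show "local_rep n G p b" if "prime p" "a \<noteq> 0" "[b = a] (mod p^(multiplicity p a + 3))"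
      "local_rep n G p a" for p a b
      using local_rep_cong that by blast
    show "p \<le> 2 * d 0 * d 1 * d 2" if "prime p" "\<not> local_rep n G p a" for p a
      using prime_le_of_not_local_rep_diag4[where d = d, OF _ d] diag that by blast
    show "local_rep n G p a" if "prime p" "a \<noteq> 0" "nat (d 0 + d 1 + d 2 + d 3) \<le> multiplicity p a" for p a
      using local_rep_diag4_of_multiplicity_ge[where d = d, OF _ _ d] diag that by blast
  qed
  finally show ?thesis
    using finite_local_exception_classes admissible_local_exception_classes
    by (intro exI[of _ S]) (auto simp: S_def)
qed

end
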